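(* Under the Physarum dynamics, let $e=\{u,v\}$ be a horizontal edge, i.e. $|p_u(t)-p_v(t)|\to0$ as $t\to\infty$. Then $D_e$ decays with rate $-1$ and $|Q_e|$ decays with rate at least $-1$.
   Context: Let $G=(N,E)$ be a finite connected undirected graph with two distinct vertices $s_0$ (source) and $s_1$ (sink). Each edge $e$ has a fixed length $L_e>0$. Each edge has a time-dependent diameter $D_e(t)$ with $D_e(0)>0$, and resistance $R_e=L_e/D_e$. At each time $t$, the vertex potentials $p_v$ (normalized by $p_{s_1}=0$) are the solution of $\sum_{u\in\delta(v)}(p_v-p_u)/R_{uv}=b_v$ for all $v$, where $\delta(v)$ is the set of neighbours of $v$, $b_{s_0}=1$, $b_{s_1}=-1$, $b_v=0$ otherwise; for an edge $e=\{u,v\}$ with an arbitrarily fixed orientation $(u,v)$ the current is $Q_e=(p_u-p_v)/R_e=D_e(p_u-p_v)/L_e$. The diameters evolve by $\dot D_e(t)=|Q_e(t)|-D_e(t)$ for all $e\in E$ (the "Physarum dynamics"). Decay rates: let $r\le 0$. A nonnegative quantity $X(t)$ decays with rate at least $r$ if for every $\varepsilon>0$ there is $A>0$ with $X(t)\le Ae^{(r+\varepsilon)t}$ for all $t\ge0$; it decays with rate at most $r$ if for every $\varepsilon>0$ there is $a>0$ with $X(t)\ge ae^{(r-\varepsilon)t}$ for all $t\ge 0$; it decays with rate $r$ if both hold. *)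

theory Defs
  imports "HOL-Analysis.Analysis"
begin

definition graph_ok :: "'v set \<Rightarrow> 'v set set \<Rightarrow> bool" where
  "graph_ok N E \<longleftrightarrow> finite N \<and> E \<subseteq> {{u, v} | u v. u \<in> N \<and> v \<in> N \<and> u \<noteq> v}
     \<and> (\<forall>u\<in>N. \<forall>v\<in>N. (u, v) \<in> {(x, y). {x, y} \<in> E}\<^sup>*)"

definition neighbours :: "'v set \<Rightarrow> 'v set set \<Rightarrow> 'v \<Rightarrow> 'v set" where
  "neighbours N E v = {u \<in> N. {u, v} \<in> E}"

definition supply_vec :: "'v \<Rightarrow> 'v \<Rightarrow> 'v \<Rightarrow> real" where
  "supply_vec s0 s1 v = (if v = s0 then 1 else if v = s1 then -1 else 0)"

definition resistance :: "('v set \<Rightarrow> real) \<Rightarrow> (real \<Rightarrow> 'v set \<Rightarrow> real) \<Rightarrow> real \<Rightarrow> 'v set \<Rightarrow> real" where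
  "resistance L D t e = L e / D t e"

definition current :: "('v set \<Rightarrow> real) \<Rightarrow> (real \<Rightarrow> 'v set \<Rightarrow> real) \<Rightarrow> (real \<Rightarrow> 'v \<Rightarrow> real)
    \<Rightarrow> real \<Rightarrow> 'v \<Rightarrow> 'v \<Rightarrow> real" where
  "current L D p t u v = (p t u - p t v) / resistance L D t {u, v}"

definition physarum :: "'v set \<Rightarrow> 'v set set \<Rightarrow> 'v \<Rightarrow> 'v \<Rightarrow> ('v set \<Rightarrow> real)
    \<Rightarrow> (real \<Rightarrow> 'v set \<Rightarrow> real) \<Rightarrow> (real \<Rightarrow> 'v \<Rightarrow> real) \<Rightarrow> bool" where
  "physarum N E s0 s1 L D p \<longleftrightarrow>
     graph_ok N E \<and> s0 \<in> N \<and> s1 \<in> N \<and> s0 \<noteq> s1 \<and>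
     (\<forall>e\<in>E. L e > 0) \<and> (\<forall>e\<in>E. D 0 e > 0) \<and>
     (\<forall>t\<ge>0. p t s1 = 0 \<and>
        (\<forall>v\<in>N. (\<Sum>u\<in>neighbours N E v. (p t v - p t u) / resistance L D t {u, v})
                 = supply_vec s0 s1 v)) \<and>
     (\<forall>u v. {u, v} \<in> E \<longrightarrow> (\<forall>t\<ge>0.
        ((\<lambda>\<tau>. D \<tau> {u, v}) has_real_derivative (\<bar>current L D p t u v\<bar> - D t {u, v}))
          (at t within {0..})))"

definition decays_at_least :: "(real \<Rightarrow> real) \<Rightarrow> real \<Rightarrow> bool" where
  "decays_at_least X r \<longleftrightarrow> (\<forall>\<epsilon>>0. \<exists>A>0. \<forall>t\<ge>0. X t \<le> A * exp ((r + \<epsilon>) * t))"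

definition decays_at_most :: "(real \<Rightarrow> real) \<Rightarrow> real \<Rightarrow> bool" where
  "decays_at_most X r \<longleftrightarrow> (\<forall>\<epsilon>>0. \<exists>a>0. \<forall>t\<ge>0. X t \<ge> a * exp ((r - \<epsilon>) * t))"

definition decays_with_rate :: "(real \<Rightarrow> real) \<Rightarrow> real \<Rightarrow> bool" where
  "decays_with_rate X r \<longleftrightarrow> decays_at_least X r \<and> decays_at_most X r"

end

theory Submission imports Defs begin

(*
  Write X t = D_e(t) and q t = |Q_e(t)| for a fixed edge e = {u,v}.  Then X solves the
  relaxation equation X' = q - X, and the proof has two independent parts.

  (1) Analysis of the relaxation equation.  Multiplying by the weight exp((1-k) t) turns a
      one-sided bound q <= k X into monotonicity of X t exp((1-k) t).  With k = 0 this gives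
      X t >= X 0 exp(-t) when q >= 0 and X <= max 1 (X 0) when q <= 1; with k = eps it gives
      X t <= C exp((-1+eps) t) as soon as q <= eps X eventually.
  (2) Electrical facts.  By Kirchhoff's law the net flow leaving the super-level set
      {x. p x >= p a} equals the supply it contains, which is at most 1; hence every single
      current satisfies |Q_e| <= 1.  Moreover |Q_e| = |p_u - p_v| D_e / L_e, so on a
      horizontal edge q <= eps X eventually, for every eps > 0.
*)

text \<open>A one-sided version of the monotonicity criterion: derivatives are only taken within
  the closed interval, as the Physarum equation only holds within the half line.\<close>
lemma nondecreasing_if_deriv_nonneg_within:
  fixes f d :: "real \<Rightarrow> real"
  assumes ab: "a \<le> b"
    and der: "\<And>x. a \<le> x \<Longrightarrow> x \<le> b \<Longrightarrow> (f has_real_derivative d x) (at x within {a..b})"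
    and nonneg: "\<And>x. a \<le> x \<Longrightarrow> x \<le> b \<Longrightarrow> d x \<ge> 0"
  shows "f a \<le> f b"
proof -
  have "\<And>x. a \<le> x \<Longrightarrow> x \<le> b \<Longrightarrow> (f has_derivative (\<lambda>h. d x * h)) (at x within {a..b})"
    using der by (simp add: has_field_derivative_def)
  from mvt_very_simple[OF ab this] obtain x where "x \<in> {a..b}" "f b - f a = d x * (b - a)"
    by auto
  moreover have "d x * (b - a) \<ge> 0" using nonneg[of x] ab \<open>x \<in> {a..b}\<close> by simp
  ultimately show ?thesis by linarith
qed

section \<open>The relaxation equation X' = q - X\<close>

text \<open>Comparison principle: if q \<le> k X on [T, t], the weighted quantity X \<tau> exp((1-k) \<tau>)
  does not increase on [T, t], because its derivative is (q - k X) exp((1-k) \<tau>).\<close>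
lemma relaxation_weighted_antitone:
  fixes X q :: "real \<Rightarrow> real"
  assumes der: "\<And>t. t \<ge> 0 \<Longrightarrow> (X has_real_derivative (q t - X t)) (at t within {0..})"
    and T: "0 \<le> T" "T \<le> t"
    and q_le: "\<And>\<tau>. T \<le> \<tau> \<Longrightarrow> \<tau> \<le> t \<Longrightarrow> q \<tau> \<le> k * X \<tau>"
  shows "X t * exp ((1 - k) * t) \<le> X T * exp ((1 - k) * T)"
proof -
  have "- X T * exp ((1 - k) * T) \<le> - X t * exp ((1 - k) * t)"
  proof (rule nondecreasing_if_deriv_nonneg_within
      [where d = "\<lambda>\<tau>. (k * X \<tau> - q \<tau>) * exp ((1 - k) * \<tau>)", OF T(2)])
    fix x assume x: "T \<le> x" "x \<le> t"
    have "(X has_real_derivative (q x - X x)) (at x within {T..t})"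
      by (rule has_field_derivative_subset[OF der]) (use x T in auto)
    then show "((\<lambda>\<tau>. - X \<tau> * exp ((1 - k) * \<tau>)) has_real_derivative
        (k * X x - q x) * exp ((1 - k) * x)) (at x within {T..t})"
      by (auto intro!: derivative_eq_intros simp: algebra_simps)
    show "0 \<le> (k * X x - q x) * exp ((1 - k) * x)" using q_le[of x] x by simp
  qed
  then show ?thesis by simp
qed

lemma relaxation_lower_bound:
  fixes X q :: "real \<Rightarrow> real"
  assumes der: "\<And>t. t \<ge> 0 \<Longrightarrow> (X has_real_derivative (q t - X t)) (at t within {0..})"
    and q_nonneg: "\<And>t. t \<ge> 0 \<Longrightarrow> q t \<ge> 0" and t: "t \<ge> 0"
  shows "X 0 * exp (- t) \<le> X t"
proof -
  have "((\<lambda>\<tau>. - X \<tau>) has_real_derivative (- q \<tau> - - X \<tau>)) (at \<tau> within {0..})"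
    if "\<tau> \<ge> 0" for \<tau>
    using der[OF that] by (auto intro!: derivative_eq_intros)
  from relaxation_weighted_antitone[OF this order_refl t, of 0] q_nonneg
  have "X 0 \<le> X t * exp t" by simp
  then show ?thesis by (simp add: exp_minus field_simps)
qed

text \<open>A source bounded by 1 keeps X below max 1 (X 0): apply the comparison to X - 1.\<close>
lemma relaxation_upper_bound:
  fixes X q :: "real \<Rightarrow> real"
  assumes der: "\<And>t. t \<ge> 0 \<Longrightarrow> (X has_real_derivative (q t - X t)) (at t within {0..})"
    and q_le: "\<And>t. t \<ge> 0 \<Longrightarrow> q t \<le> 1" and t: "t \<ge> 0"
  shows "X t \<le> max 1 (X 0)"
proof -
  have "((\<lambda>\<tau>. X \<tau> - 1) has_real_derivative ((q \<tau> - 1) - (X \<tau> - 1))) (at \<tau> within {0..})"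
    if "\<tau> \<ge> 0" for \<tau>
    using der[OF that] by (auto intro!: derivative_eq_intros)
  from relaxation_weighted_antitone[OF this order_refl t, of 0] q_le
  have weighted: "(X t - 1) * exp t \<le> X 0 - 1" by simp
  show ?thesis
  proof (cases "X t \<le> 1")
    case False
    then have "X t - 1 \<le> (X t - 1) * exp t" using t by (simp add: mult_le_cancel_left1)
    then show ?thesis using weighted by simp
  qed simp
qed

lemma decays_at_most_if_exp_lower_bound:
  assumes a: "a > 0" and lower: "\<And>t. t \<ge> 0 \<Longrightarrow> a * exp (r * t) \<le> X t"
  shows "decays_at_most X r"
  unfolding decays_at_most_def
proof (intro allI impI exI[of _ a] conjI a)
  fix \<epsilon> t :: real assume "\<epsilon> > 0" "t \<ge> 0"
  then have "exp ((r - \<epsilon>) * t) \<le> exp (r * t)" by (simp add: algebra_simps)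
  then have "a * exp ((r - \<epsilon>) * t) \<le> a * exp (r * t)" using a by simp
  then show "a * exp ((r - \<epsilon>) * t) \<le> X t" using lower[OF \<open>t \<ge> 0\<close>] by linarith
qed

text \<open>A bounded quantity that eventually obeys an exponential bound obeys one globally,
  with a larger constant: on the bounded initial interval [0, T] the exponential stays
  above exp (- |r| T).\<close>
lemma exp_bound_from_eventual_bound:
  fixes X :: "real \<Rightarrow> real"
  assumes bounded: "\<And>t. t \<ge> 0 \<Longrightarrow> X t \<le> M"
    and eventual: "\<And>t. t \<ge> 0 \<Longrightarrow> T \<le> t \<Longrightarrow> X t \<le> C * exp (r * t)"
  shows "\<exists>A>0. \<forall>t\<ge>0. X t \<le> A * exp (r * t)"
proof (intro exI[of _ "max 1 (max C (M * exp (\<bar>r\<bar> * T)))"] conjI allI impI)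
  define A where "A = max 1 (max C (M * exp (\<bar>r\<bar> * T)))"
  show "A > 0" by (simp add: A_def)
  fix t :: real assume t: "t \<ge> 0"
  show "X t \<le> A * exp (r * t)"
  proof (cases "T \<le> t")
    case True
    have "C * exp (r * t) \<le> A * exp (r * t)" by (simp add: A_def)
    then show ?thesis using eventual[OF t True] by linarith
  next
    case False
    have "- \<bar>r\<bar> * T \<le> - \<bar>r\<bar> * t" using False by (simp add: mult_left_mono)
    also have "\<dots> \<le> r * t" using t by (intro mult_right_mono) auto
    finally have "exp (- \<bar>r\<bar> * T) \<le> exp (r * t)" by simp
    then have "M * exp (\<bar>r\<bar> * T) * exp (- \<bar>r\<bar> * T) \<le> A * exp (r * t)"
      by (intro mult_mono) (auto simp: A_def)
    moreover have "exp (\<bar>r\<bar> * T) * exp (- \<bar>r\<bar> * T) = 1" by (simp flip: exp_add)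
    ultimately have "M \<le> A * exp (r * t)" by (simp add: mult.assoc)
    then show ?thesis using bounded[OF t] by linarith
  qed
qed

lemma relaxation_decay:
  fixes X q :: "real \<Rightarrow> real"
  assumes der: "\<And>t. t \<ge> 0 \<Longrightarrow> (X has_real_derivative (q t - X t)) (at t within {0..})"
    and q_nonneg: "\<And>t. t \<ge> 0 \<Longrightarrow> q t \<ge> 0" and q_le: "\<And>t. t \<ge> 0 \<Longrightarrow> q t \<le> 1"
    and X0: "X 0 > 0"
    and small: "\<And>\<epsilon>. \<epsilon> > 0 \<Longrightarrow> \<forall>\<^sub>F t in at_top. q t \<le> \<epsilon> * X t"
  shows "decays_with_rate X (-1) \<and> decays_at_least q (-1)"
proof -
  have slow: "decays_at_most X (-1)"
    using relaxation_lower_bound[OF der q_nonneg] X0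
    by (intro decays_at_most_if_exp_lower_bound[of "X 0"]) auto
  have fast: "\<exists>A>0. \<forall>t\<ge>0. X t \<le> A * exp ((-1 + \<epsilon>) * t)"
    "\<exists>A>0. \<forall>t\<ge>0. q t \<le> A * exp ((-1 + \<epsilon>) * t)" if \<epsilon>: "\<epsilon> > 0" for \<epsilon>
  proof -
    obtain T0 where T0: "\<And>t. t \<ge> T0 \<Longrightarrow> q t \<le> \<epsilon> * X t"
      using small[OF \<epsilon>] by (auto simp: eventually_at_top_linorder)
    define T where "T = max T0 0"
    have X_late: "X t \<le> (X T * exp ((1 - \<epsilon>) * T)) * exp ((-1 + \<epsilon>) * t)" if "T \<le> t" for t
    proof -
      have "X t * exp ((1 - \<epsilon>) * t) \<le> X T * exp ((1 - \<epsilon>) * T)"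
        using that T0 by (intro relaxation_weighted_antitone[OF der]) (auto simp: T_def)
      then have "X t * exp ((1 - \<epsilon>) * t) * exp ((-1 + \<epsilon>) * t)
          \<le> X T * exp ((1 - \<epsilon>) * T) * exp ((-1 + \<epsilon>) * t)" by simp
      moreover have "exp ((1 - \<epsilon>) * t) * exp ((-1 + \<epsilon>) * t) = 1"
        by (simp add: algebra_simps flip: exp_add)
      ultimately show ?thesis by (metis mult.assoc mult.right_neutral)
    qed
    show "\<exists>A>0. \<forall>t\<ge>0. X t \<le> A * exp ((-1 + \<epsilon>) * t)"
      using relaxation_upper_bound[OF der q_le] X_late by (rule exp_bound_from_eventual_bound)
    then obtain A where A: "\<And>t. t \<ge> 0 \<Longrightarrow> X t \<le> A * exp ((-1 + \<epsilon>) * t)" by blast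
    have "q t \<le> (\<epsilon> * A) * exp ((-1 + \<epsilon>) * t)" if "t \<ge> 0" "T \<le> t" for t
    proof -
      have "\<epsilon> * X t \<le> \<epsilon> * (A * exp ((-1 + \<epsilon>) * t))" using A[of t] that \<epsilon> by simp
      then show ?thesis using T0[of t] that by (simp add: T_def mult.assoc)
    qed
    with q_le show "\<exists>A>0. \<forall>t\<ge>0. q t \<le> A * exp ((-1 + \<epsilon>) * t)"
      by (rule exp_bound_from_eventual_bound)
  qed
  then show ?thesis
    using slow by (simp add: decays_with_rate_def decays_at_least_def)
qed

section \<open>Currents across a cut\<close>

lemma sum_antisymmetric_pairs:
  fixes g :: "'a \<Rightarrow> 'a \<Rightarrow> real"
  assumes anti: "\<And>x w. g x w = - g w x"
  shows "(\<Sum>x\<in>S. \<Sum>w\<in>S. g x w) = 0"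
proof -
  have "(\<Sum>x\<in>S. \<Sum>w\<in>S. g x w) = (\<Sum>w\<in>S. \<Sum>x\<in>S. - g w x)"
    by (subst sum.swap) (simp add: anti[symmetric])
  also have "\<dots> = - (\<Sum>x\<in>S. \<Sum>w\<in>S. g x w)" by (simp add: sum_negf)
  finally show ?thesis by simp
qed

text \<open>Flow conservation: if Kirchhoff's law holds at every vertex, the total flow leaving a
  vertex set S through the edges of its boundary equals the supply inside S; the flows along
  edges inside S cancel in pairs.\<close>
lemma outflow_eq_supply:
  fixes P :: "'v \<Rightarrow> real" and r :: "'v set \<Rightarrow> real"
  assumes finN: "finite N" and SN: "S \<subseteq> N"
    and kirchhoff: "\<And>x. x \<in> N \<Longrightarrow> (\<Sum>w\<in>neighbours N E x. (P x - P w) / r {w, x}) = b x"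
  shows "(\<Sum>x\<in>S. \<Sum>w\<in>neighbours N E x - S. (P x - P w) / r {w, x}) = (\<Sum>x\<in>S. b x)"
proof -
  define f where "f x w = (P x - P w) / r {w, x}" for x w
  define g where "g x w = (if {w, x} \<in> E then f x w else 0)" for x w
  have finS: "finite S" using finN SN by (rule finite_subset[rotated])
  have split: "(\<Sum>w\<in>neighbours N E x. f x w)
      = (\<Sum>w\<in>S. g x w) + (\<Sum>w\<in>neighbours N E x - S. f x w)" for x
  proof -
    have "finite (neighbours N E x)" using finN by (simp add: neighbours_def)
    then have "(\<Sum>w\<in>neighbours N E x. f x w)
        = (\<Sum>w\<in>neighbours N E x \<inter> S. f x w) + (\<Sum>w\<in>neighbours N E x - S. f x w)"
      by (rule sum.Int_Diff)
    moreover have "neighbours N E x \<inter> S = {w\<in>S. {w, x} \<in> E}"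
      using SN by (auto simp: neighbours_def)
    ultimately show ?thesis using finS by (simp add: sum.inter_filter g_def)
  qed
  have "g x w = - g w x" for x w
    by (simp add: g_def f_def insert_commute minus_divide_left)
  then have inner: "(\<Sum>x\<in>S. \<Sum>w\<in>S. g x w) = 0" by (rule sum_antisymmetric_pairs)
  have "(\<Sum>x\<in>S. b x) = (\<Sum>x\<in>S. \<Sum>w\<in>neighbours N E x. f x w)"
    using kirchhoff SN by (auto simp: f_def intro!: sum.cong)
  also have "\<dots> = (\<Sum>x\<in>S. \<Sum>w\<in>neighbours N E x - S. f x w)"
    using inner by (simp add: split sum.distrib)
  finally show ?thesis by (simp add: f_def)
qed

text \<open>No current exceeds 1: apply flow conservation to the super-level set
  S = {x. P a \<le> P x}.  Every boundary flow of S is nonnegative, one of them is the current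
  from a to b, and the supply inside S is at most 1.\<close>
lemma current_across_cut_le_1:
  fixes P :: "'v \<Rightarrow> real" and r :: "'v set \<Rightarrow> real"
  assumes finN: "finite N"
    and r_nonneg: "\<And>e. e \<in> E \<Longrightarrow> r e \<ge> 0"
    and kirchhoff: "\<And>x. x \<in> N \<Longrightarrow>
        (\<Sum>w\<in>neighbours N E x. (P x - P w) / r {w, x}) = supply_vec s0 s1 x"
    and ab: "{a, b} \<in> E" "a \<in> N" "b \<in> N" "P b < P a"
  shows "(P a - P b) / r {a, b} \<le> 1"
proof -
  define S where "S = {x\<in>N. P a \<le> P x}"
  define f where "f x w = (P x - P w) / r {w, x}" for x w
  have finS: "finite S" using finN by (simp add: S_def)
  have aS: "a \<in> S" using ab by (simp add: S_def)
  have boundary_nonneg: "f x w \<ge> 0" if "x \<in> S" "w \<in> neighbours N E x - S" for x w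
  proof -
    have "{w, x} \<in> E" "P w < P x" using that by (auto simp: neighbours_def S_def)
    then show ?thesis using r_nonneg[of "{w, x}"] by (simp add: f_def)
  qed
  have b_boundary: "b \<in> neighbours N E a - S"
    using ab by (auto simp: neighbours_def S_def insert_commute)
  have "f a b \<le> (\<Sum>w\<in>neighbours N E a - S. f a w)"
    using finN boundary_nonneg aS by (intro member_le_sum[OF b_boundary]) (auto simp: neighbours_def)
  also have "\<dots> \<le> (\<Sum>x\<in>S. \<Sum>w\<in>neighbours N E x - S. f x w)"
    using boundary_nonneg finS by (intro member_le_sum[OF aS] sum_nonneg) auto
  also have "\<dots> = (\<Sum>x\<in>S. supply_vec s0 s1 x)"
    unfolding f_def by (rule outflow_eq_supply[OF finN _ kirchhoff]) (auto simp: S_def)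
  also have "\<dots> \<le> (\<Sum>x\<in>S. if x = s0 then 1 else 0)"
    by (rule sum_mono) (simp add: supply_vec_def)
  also have "\<dots> \<le> 1" using finS by simp
  finally show ?thesis by (simp add: f_def insert_commute)
qed

lemma physarum_diameter_lower_bound:
  assumes ph: "physarum N E s0 s1 L D p" and e: "{a, b} \<in> E" and t: "t \<ge> 0"
  shows "D 0 {a, b} * exp (- t) \<le> D t {a, b}"
  using ph e t unfolding physarum_def
  by (intro relaxation_lower_bound[where q = "\<lambda>t. \<bar>current L D p t a b\<bar>"]) auto

lemma physarum_diameter_pos:
  assumes ph: "physarum N E s0 s1 L D p" and e: "{a, b} \<in> E" and t: "t \<ge> 0"
  shows "D t {a, b} > 0"
proof -
  have "D 0 {a, b} > 0" using ph e by (simp add: physarum_def)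
  then have "D 0 {a, b} * exp (- t) > 0" by simp
  then show ?thesis using physarum_diameter_lower_bound[OF ph e t] by linarith
qed

text \<open>The
  orientation with the higher potential first is handled by the cut lemma; the current
  changes sign when the orientation is reversed.\<close>
lemma physarum_current_le_1:
  assumes ph: "physarum N E s0 s1 L D p" and e: "{a, b} \<in> E" and t: "t \<ge> 0"
  shows "\<bar>current L D p t a b\<bar> \<le> 1"
proof -
  have directed: "current L D p t x y \<le> 1" if "{x, y} \<in> E" "p t y < p t x" for x y
  proof -
    have finN: "finite N" and ends: "x \<in> N" "y \<in> N"
      using ph that(1) by (auto simp: physarum_def graph_ok_def doubleton_eq_iff)
    have "resistance L D t e' \<ge> 0" if "e' \<in> E" for e'
    proof -
      obtain c d where "e' = {c, d}" using ph \<open>e' \<in> E\<close> by (auto simp: physarum_def graph_ok_def)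
      then show ?thesis using ph \<open>e' \<in> E\<close> physarum_diameter_pos[OF ph _ t, of c d]
        by (auto simp: resistance_def physarum_def less_imp_le)
    qed
    moreover have "\<And>z. z \<in> N \<Longrightarrow> (\<Sum>w\<in>neighbours N E z. (p t z - p t w) / resistance L D t {w, z})
        = supply_vec s0 s1 z" using ph t by (simp add: physarum_def)
    ultimately show ?thesis
      unfolding current_def using current_across_cut_le_1[OF finN] that ends by blast
  qed
  have flip: "current L D p t b a = - current L D p t a b"
    by (simp add: current_def insert_commute minus_divide_left)
  have e': "{b, a} \<in> E" using e by (simp add: insert_commute)
  have L: "L {a, b} > 0" using ph e by (simp add: physarum_def)
  consider "p t b < p t a" | "p t a < p t b" | "p t a = p t b" by linarith
  then show ?thesis
  proof cases
    case 1
    then have "current L D p t a b \<ge> 0"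
      using physarum_diameter_pos[OF ph e t] L by (simp add: current_def resistance_def)
    then show ?thesis using directed[OF e 1] by simp
  next
    case 2
    then have "current L D p t b a \<ge> 0"
      using physarum_diameter_pos[OF ph e' t] L by (simp add: current_def resistance_def insert_commute)
    then show ?thesis using directed[OF e' 2] flip by simp
  qed (simp add: current_def)
qed

text \<open>On a horizontal edge the current is eventually negligible compared to the diameter,
  since |Q_e| = |p_u - p_v| D_e / L_e.\<close>
lemma physarum_horizontal_current_small:
  assumes ph: "physarum N E s0 s1 L D p" and e: "{u, v} \<in> E"
    and horizontal: "((\<lambda>t. \<bar>p t u - p t v\<bar>) \<longlongrightarrow> 0) at_top" and \<epsilon>: "\<epsilon> > 0"
  shows "\<forall>\<^sub>F t in at_top. \<bar>current L D p t u v\<bar> \<le> \<epsilon> * D t {u, v}"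
proof -
  have L: "L {u, v} > 0" using ph e by (simp add: physarum_def)
  have "\<forall>\<^sub>F t in at_top. \<bar>p t u - p t v\<bar> < \<epsilon> * L {u, v} \<and> t \<ge> 0"
    using order_tendstoD(2)[OF horizontal] \<epsilon> L by (auto intro: eventually_conj eventually_ge_at_top)
  then show ?thesis
  proof (rule eventually_mono)
    fix t assume t: "\<bar>p t u - p t v\<bar> < \<epsilon> * L {u, v} \<and> t \<ge> 0"
    have D: "D t {u, v} > 0" using physarum_diameter_pos[OF ph e] t by simp
    have "\<bar>current L D p t u v\<bar> = \<bar>p t u - p t v\<bar> * D t {u, v} / L {u, v}"
      using D L by (simp add: current_def resistance_def abs_divide abs_mult)
    also have "\<dots> \<le> (\<epsilon> * L {u, v}) * D t {u, v} / L {u, v}"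
      using t D L by (intro divide_right_mono mult_right_mono) auto
    finally show "\<bar>current L D p t u v\<bar> \<le> \<epsilon> * D t {u, v}" using L by simp
  qed
qed

theorem mainTheorem12:
  fixes N :: "'v set" and E :: "'v set set" and s0 s1 u v :: 'v
    and L :: "'v set \<Rightarrow> real" and D :: "real \<Rightarrow> 'v set \<Rightarrow> real" and p :: "real \<Rightarrow> 'v \<Rightarrow> real"
  assumes "physarum N E s0 s1 L D p"
    and "{u, v} \<in> E"
    and "((\<lambda>t. \<bar>p t u - p t v\<bar>) \<longlongrightarrow> 0) at_top"
  shows "decays_with_rate (\<lambda>t. D t {u, v}) (-1)
       \<and> decays_at_least (\<lambda>t. \<bar>current L D p t u v\<bar>) (-1)"
proof (rule relaxation_decay)
  show "((\<lambda>t. D t {u, v}) has_real_derivative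
      (\<bar>current L D p t u v\<bar> - D t {u, v})) (at t within {0..})" if "t \<ge> 0" for t
    using assms(1,2) that by (simp add: physarum_def)
  show "\<bar>current L D p t u v\<bar> \<le> 1" if "t \<ge> 0" for t
    using physarum_current_le_1[OF assms(1,2) that] .
  show "D 0 {u, v} > 0" using assms(1,2) by (simp add: physarum_def)
  show "\<forall>\<^sub>F t in at_top. \<bar>current L D p t u v\<bar> \<le> \<epsilon> * D t {u, v}" if "\<epsilon> > 0" for \<epsilon>
    using physarum_horizontal_current_small[OF assms that] .
qed simp

end
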